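(* Let $u,v$ be homogeneous elements of $\mathfrak{B}(V)$ with $\mu(u)\cap\mu(v)=\emptyset$. If $uv=0$, then $u=0$ or $v=0$.
   Context: $V$ is a braided vector space of diagonal type over an algebraically closed field of characteristic $0$ with basis $x_1,\dots,x_n$ and braiding $C(x_i\otimes x_j)=q_{ij}x_j\otimes x_i$; $\mathfrak{B}(V)$ is its Nichols algebra, $\mathbb{Z}^n$-graded with $\deg x_i=e_i$. For a homogeneous element $w$ with $\deg w=\sum_i\lambda_ie_i$, $\mu(w):=\{x_i:\lambda_i>0\}$. *)

theory Defs
  imports "HOL-Computational_Algebra.Polynomial" "HOL-Combinatorics.Permutations"
begin

definition alg_closed :: "'k::field itself \<Rightarrow> bool" where
  "alg_closed _ \<longleftrightarrow> (\<forall>p :: 'k poly. degree p > 0 \<longrightarrow> (\<exists>x. poly p x = 0))"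

text \<open>Elements of the tensor algebra T(V), V with basis x_0,...,x_(n-1):
  finitely supported coefficient functions on words (lists of indices < n).\<close>
definition tvec :: "nat \<Rightarrow> (nat list \<Rightarrow> 'k::field) \<Rightarrow> bool" where
  "tvec n u \<longleftrightarrow> finite {w. u w \<noteq> 0} \<and> (\<forall>w. u w \<noteq> 0 \<longrightarrow> set w \<subseteq> {..<n})"

definition tmult :: "(nat list \<Rightarrow> 'k::field) \<Rightarrow> (nat list \<Rightarrow> 'k) \<Rightarrow> nat list \<Rightarrow> 'k" where
  "tmult u v w = (\<Sum>k\<le>length w. u (take k w) * v (drop k w))"

text \<open>Braid-group lift of a permutation sigma for a diagonal braiding q acting on the word w:
  the coefficient is the product of q(w_a, w_b) over inversion pairs a<b, sigma a > sigma b;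
  the resulting word has letter w_(inv sigma k) at position k.\<close>
definition perm_word :: "(nat \<Rightarrow> nat) \<Rightarrow> nat list \<Rightarrow> nat list" where
  "perm_word \<sigma> w = map (\<lambda>k. w ! inv \<sigma> k) [0..<length w]"

definition braid_coeff :: "(nat \<Rightarrow> nat \<Rightarrow> 'k::field) \<Rightarrow> (nat \<Rightarrow> nat) \<Rightarrow> nat list \<Rightarrow> 'k" where
  "braid_coeff q \<sigma> w = (\<Prod>(a,b)\<in>{(a,b). a < b \<and> b < length w \<and> \<sigma> b < \<sigma> a}. q (w ! a) (w ! b))"

text \<open>Coefficient of the word w' in Omega(w), Omega the quantum symmetrizer.\<close>
definition omega_coeff :: "(nat \<Rightarrow> nat \<Rightarrow> 'k::field) \<Rightarrow> nat list \<Rightarrow> nat list \<Rightarrow> 'k" where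
  "omega_coeff q w w' =
     (\<Sum>\<sigma>\<in>{\<sigma>. \<sigma> permutes {..<length w} \<and> perm_word \<sigma> w = w'}. braid_coeff q \<sigma> w)"

definition qsymm :: "(nat \<Rightarrow> nat \<Rightarrow> 'k::field) \<Rightarrow> (nat list \<Rightarrow> 'k) \<Rightarrow> nat list \<Rightarrow> 'k" where
  "qsymm q u w' = (\<Sum>w\<in>{w. u w \<noteq> 0}. u w * omega_coeff q w w')"

text \<open>The Nichols algebra B(V) = T(V)/ker(Omega): an element of T(V) represents 0 in B(V)
  iff it lies in the kernel of the quantum symmetrizer.\<close>
definition nichols_zero :: "(nat \<Rightarrow> nat \<Rightarrow> 'k::field) \<Rightarrow> (nat list \<Rightarrow> 'k) \<Rightarrow> bool" where
  "nichols_zero q u \<longleftrightarrow> qsymm q u = (\<lambda>_. 0)"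

definition homog :: "(nat list \<Rightarrow> 'k::zero) \<Rightarrow> (nat \<Rightarrow> nat) \<Rightarrow> bool" where
  "homog u d \<longleftrightarrow> (\<forall>w. u w \<noteq> 0 \<longrightarrow> (\<forall>i. count_list w i = d i))"

definition mu :: "nat \<Rightarrow> (nat \<Rightarrow> nat) \<Rightarrow> nat set" where
  "mu n d = {i. i < n \<and> d i > 0}"

end

theory Submission
  imports Defs
begin

text \<open>
  Let S be the set of generators occurring in u. All words in the support of u have letters in S
  and a common length m, while every word w2 at which Omega(v) is nonzero is a rearrangement of a
  word of v and hence avoids S. A permutation carrying a word a b to w1 w2, where a and w1 have
  length m, can therefore not move a letter of a into w2: it preserves the first m positions and
  is a block sum of two permutations. No inversion of a block sum crosses the blocks, so the braid
  coefficients multiply and Omega(u v)(w1 w2) = Omega(u)(w1) * Omega(v)(w2). Choosing w1 and w2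
  with both factors nonzero contradicts u v = 0 in the Nichols algebra.
\<close>

definition block_perm :: "nat \<Rightarrow> nat \<Rightarrow> (nat \<Rightarrow> nat) \<Rightarrow> (nat \<Rightarrow> nat) \<Rightarrow> nat \<Rightarrow> nat" where
  "block_perm m l s t i = (if i < m then s i else if i < m + l then m + t (i - m) else i)"

lemma block_perm_comp:
  assumes "s' permutes {..<m}" "t' permutes {..<l}"
  shows "block_perm m l s t \<circ> block_perm m l s' t' = block_perm m l (s \<circ> s') (t \<circ> t')"
proof
  fix i
  have "s' i < m \<longleftrightarrow> i < m" "t' (i - m) < l \<longleftrightarrow> i - m < l"
    using permutes_in_image[OF assms(1)] permutes_in_image[OF assms(2)] by simp_all
  then show "(block_perm m l s t \<circ> block_perm m l s' t') i = block_perm m l (s \<circ> s') (t \<circ> t') i"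
    by (auto simp: block_perm_def)
qed

lemma block_perm_id: "block_perm m l id id = id"
  by (auto simp: block_perm_def fun_eq_iff)

lemma
  assumes "s permutes {..<m}" "t permutes {..<l}"
  shows block_perm_permutes: "block_perm m l s t permutes {..<m + l}"
    and inv_block_perm: "inv (block_perm m l s t) = block_perm m l (inv s) (inv t)"
proof -
  have inv_perms: "inv s permutes {..<m}" "inv t permutes {..<l}"
    using assms by (simp_all add: permutes_inv)
  have right_inv: "block_perm m l s t \<circ> block_perm m l (inv s) (inv t) = id"
    and left_inv: "block_perm m l (inv s) (inv t) \<circ> block_perm m l s t = id"
    by (simp_all add: block_perm_comp assms inv_perms block_perm_id
        permutes_inv_o[OF assms(1)] permutes_inv_o[OF assms(2)])
  show "inv (block_perm m l s t) = block_perm m l (inv s) (inv t)"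
    using right_inv left_inv by (rule inv_unique_comp)
  have "bij (block_perm m l s t)"
    using left_inv right_inv by (rule o_bij)
  moreover have "\<forall>i. i \<notin> {..<m + l} \<longrightarrow> block_perm m l s t i = i"
    by (simp add: block_perm_def)
  ultimately show "block_perm m l s t permutes {..<m + l}"
    by (simp add: permutes_def bij_iff)
qed

lemma block_perm_inject:
  assumes "s permutes {..<m}" "t permutes {..<l}" "s' permutes {..<m}" "t' permutes {..<l}"
    and "block_perm m l s t = block_perm m l s' t'"
  shows "s = s' \<and> t = t'"
proof (intro conjI ext)
  fix i
  show "s i = s' i"
    using fun_cong[OF assms(5), of i] permutes_not_in[OF assms(1)] permutes_not_in[OF assms(3)]
    by (cases "i < m") (auto simp: block_perm_def)
  show "t i = t' i"
    using fun_cong[OF assms(5), of "i + m"] permutes_not_in[OF assms(2)] permutes_not_in[OF assms(4)]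
    by (cases "i < l") (auto simp: block_perm_def)
qed

lemma length_perm_word [simp]: "length (perm_word \<sigma> w) = length w"
  by (simp add: perm_word_def)

lemma nth_perm_word: "k < length w \<Longrightarrow> perm_word \<sigma> w ! k = w ! inv \<sigma> k"
  by (simp add: perm_word_def)

lemma perm_word_block_perm:
  assumes "s permutes {..<length a}" "t permutes {..<length b}"
  shows "perm_word (block_perm (length a) (length b) s t) (a @ b) = perm_word s a @ perm_word t b"
    (is "?lhs = ?rhs")
proof (rule nth_equalityI)
  fix k assume "k < length ?lhs"
  then have k: "k < length a + length b" by simp
  have "inv s k < length a \<longleftrightarrow> k < length a"
    using permutes_in_image[OF permutes_inv[OF assms(1)]] by simp
  moreover have "inv t (k - length a) < length b" if "\<not> k < length a"
    using permutes_in_image[OF permutes_inv[OF assms(2)]] k that by simp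
  ultimately show "?lhs ! k = ?rhs ! k"
    using k by (auto simp: nth_perm_word inv_block_perm[OF assms] block_perm_def nth_append)
qed simp

definition inversions :: "(nat \<Rightarrow> nat) \<Rightarrow> nat \<Rightarrow> (nat \<times> nat) set" where
  "inversions \<sigma> n = {(i, j). i < j \<and> j < n \<and> \<sigma> j < \<sigma> i}"

lemma braid_coeff_eq_prod_inversions:
  "braid_coeff q \<sigma> w = (\<Prod>(i, j)\<in>inversions \<sigma> (length w). q (w ! i) (w ! j))"
  by (simp add: braid_coeff_def inversions_def)

lemma finite_inversions: "finite (inversions \<sigma> n)"
  by (rule finite_subset[of _ "{..<n} \<times> {..<n}"]) (auto simp: inversions_def)

lemma inversions_block_perm:
  assumes "s permutes {..<m}" "t permutes {..<l}"
  shows "inversions (block_perm m l s t) (m + l)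
    = inversions s m \<union> (\<lambda>(i, j). (i + m, j + m)) ` inversions t l"
proof -
  have s_low: "s i < m" if "i < m" for i
    using that permutes_in_image[OF assms(1)] by simp
  have no_crossing: "block_perm m l s t i < block_perm m l s t j" if "i < m" "m \<le> j" for i j
    using that s_low[of i] by (auto simp: block_perm_def)
  show ?thesis
  proof (intro set_eqI iffI)
    fix p assume "p \<in> inversions (block_perm m l s t) (m + l)"
    then obtain i j where p: "p = (i, j)" "i < j" "j < m + l"
        and inv: "block_perm m l s t j < block_perm m l s t i"
      by (auto simp: inversions_def)
    consider "j < m" | "m \<le> i" | "i < m" "m \<le> j" by linarith
    then show "p \<in> inversions s m \<union> (\<lambda>(i, j). (i + m, j + m)) ` inversions t l"
    proof cases
      case 1 then show ?thesis using p inv by (auto simp: inversions_def block_perm_def)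
    next
      case 2
      then have "(i - m, j - m) \<in> inversions t l" using p inv
        by (auto simp: inversions_def block_perm_def)
      then show ?thesis using p 2 by (auto intro!: image_eqI[where x = "(i - m, j - m)"])
    next
      case 3 then show ?thesis using no_crossing inv by fastforce
    qed
  qed (auto simp: inversions_def block_perm_def)
qed

lemma braid_coeff_block_perm:
  assumes "s permutes {..<length a}" "t permutes {..<length b}"
  shows "braid_coeff q (block_perm (length a) (length b) s t) (a @ b)
    = braid_coeff q s a * braid_coeff q t b"
proof -
  let ?m = "length a" and ?shift = "\<lambda>(i, j). (i + length a, j + length a)"
  have disjoint: "inversions s ?m \<inter> ?shift ` inversions t (length b) = {}"
    by (auto simp: inversions_def)
  have "braid_coeff q (block_perm ?m (length b) s t) (a @ b)
      = (\<Prod>(i, j)\<in>inversions s ?m. q ((a @ b) ! i) ((a @ b) ! j))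
        * (\<Prod>(i, j)\<in>?shift ` inversions t (length b). q ((a @ b) ! i) ((a @ b) ! j))"
    by (simp add: braid_coeff_eq_prod_inversions inversions_block_perm[OF assms]
        prod.union_disjoint[OF finite_inversions _ disjoint] finite_inversions)
  also have "(\<Prod>(i, j)\<in>inversions s ?m. q ((a @ b) ! i) ((a @ b) ! j)) = braid_coeff q s a"
    unfolding braid_coeff_eq_prod_inversions
    by (rule prod.cong) (auto simp: inversions_def nth_append)
  also have "(\<Prod>(i, j)\<in>?shift ` inversions t (length b). q ((a @ b) ! i) ((a @ b) ! j))
      = braid_coeff q t b"
    unfolding braid_coeff_eq_prod_inversions
    by (subst prod.reindex) (auto simp: inj_on_def inversions_def nth_append intro!: prod.cong)
  finally show ?thesis .
qed

lemma permutes_block_decomp: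
  assumes perm: "\<sigma> permutes {..<m + l}" and stable: "\<And>i. i < m \<Longrightarrow> \<sigma> i < m"
  obtains s t where "s permutes {..<m}" "t permutes {..<l}" "\<sigma> = block_perm m l s t"
proof -
  have inj: "inj \<sigma>" using permutes_inj[OF perm] .
  have low: "\<sigma> ` {..<m} = {..<m}"
    using stable by (intro endo_inj_surj permutes_inj_on[OF perm]) auto
  have high: "m \<le> \<sigma> i \<and> \<sigma> i < m + l" if "m \<le> i" "i < m + l" for i
  proof -
    have "\<sigma> i \<notin> \<sigma> ` {..<m}" using that by (simp add: inj_image_mem_iff[OF inj])
    then show ?thesis using low permutes_in_image[OF perm, of i] that by auto
  qed
  define s where "s i = (if i < m then \<sigma> i else i)" for i
  define t where "t i = (if i < l then \<sigma> (i + m) - m else i)" for i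
  have "s permutes {..<m}"
  proof (rule bij_imp_permutes)
    have "bij_betw s {..<m} {..<m} = bij_betw \<sigma> {..<m} {..<m}"
      by (rule bij_betw_cong) (simp add: s_def)
    then show "bij_betw s {..<m} {..<m}"
      by (simp add: bij_betw_def low permutes_inj_on[OF perm])
  qed (simp add: s_def)
  moreover have "t permutes {..<l}"
  proof (rule bij_imp_permutes)
    have "inj_on t {..<l}"
    proof (rule inj_onI)
      fix i j assume "i \<in> {..<l}" "j \<in> {..<l}" "t i = t j"
      then have "\<sigma> (i + m) = \<sigma> (j + m)"
        using high[of "i + m"] high[of "j + m"] by (simp add: t_def) arith
      then show "i = j" using inj by (simp add: inj_eq)
    qed
    moreover have "t ` {..<l} \<subseteq> {..<l}"
    proof (rule image_subsetI)
      fix i assume "i \<in> {..<l}"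
      then show "t i \<in> {..<l}" using high[of "i + m"] by (simp add: t_def) arith
    qed
    ultimately show "bij_betw t {..<l} {..<l}"
      by (simp add: bij_betw_def endo_inj_surj)
  qed (simp add: t_def)
  moreover have "\<sigma> i = block_perm m l s t i" for i
  proof (cases "m \<le> i \<and> i < m + l")
    case True
    then have "i - m < l" by arith
    then show ?thesis using True high[of i] by (simp add: block_perm_def t_def)
  next
    case False
    then show ?thesis using permutes_not_in[OF perm, of i] by (auto simp: block_perm_def s_def)
  qed
  ultimately show ?thesis using that by blast
qed

lemma perm_word_eq_permute_list: "perm_word \<sigma> w = permute_list (inv \<sigma>) w"
  by (simp add: perm_word_def permute_list_def)

lemma mset_perm_word: "\<sigma> permutes {..<length w} \<Longrightarrow> mset (perm_word \<sigma> w) = mset w"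
  by (simp add: perm_word_eq_permute_list permutes_inv)

lemma perm_word_append_stable:
  assumes perm: "\<sigma> permutes {..<length (a @ b)}"
    and word: "perm_word \<sigma> (a @ b) = w1 @ w2" and len: "length w1 = length a"
    and "set a \<subseteq> S" "set w2 \<inter> S = {}" and i: "i < length a"
  shows "\<sigma> i < length a"
proof (rule ccontr)
  assume moved: "\<not> \<sigma> i < length a"
  have "\<sigma> i < length (w1 @ w2)"
    using permutes_in_image[OF perm, of i] i word[THEN arg_cong[of _ _ length]] by simp
  then have "w2 ! (\<sigma> i - length a) \<in> set w2"
    using moved len by simp
  moreover have "w2 ! (\<sigma> i - length a) = a ! i"
  proof -
    have "(w1 @ w2) ! \<sigma> i = (a @ b) ! i"
      using \<open>\<sigma> i < length (w1 @ w2)\<close> word[THEN arg_cong[of _ _ length]]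
      by (simp add: word[symmetric] nth_perm_word permutes_inverses(2)[OF perm])
    then show ?thesis using moved len i by (simp add: nth_append)
  qed
  ultimately show False using assms(4,5) nth_mem[OF i] by auto
qed

lemma omega_coeff_append:
  assumes len: "length w1 = length a" and "set a \<subseteq> S" "set w2 \<inter> S = {}"
  shows "omega_coeff q (a @ b) (w1 @ w2) = omega_coeff q a w1 * omega_coeff q b w2"
proof -
  let ?m = "length a" and ?l = "length b"
  define P where "P = {\<sigma>. \<sigma> permutes {..<length (a @ b)} \<and> perm_word \<sigma> (a @ b) = w1 @ w2}"
  define P1 where "P1 = {s. s permutes {..<?m} \<and> perm_word s a = w1}"
  define P2 where "P2 = {t. t permutes {..<?l} \<and> perm_word t b = w2}"
  define F where "F = (\<lambda>(s, t). block_perm ?m ?l s t)"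
  have "bij_betw F (P1 \<times> P2) P"
    unfolding bij_betw_def
  proof (intro conjI subset_antisym)
    show "inj_on F (P1 \<times> P2)"
      by (auto simp: inj_on_def F_def P1_def P2_def dest: block_perm_inject)
    show "F ` (P1 \<times> P2) \<subseteq> P"
      by (auto simp: F_def P_def P1_def P2_def block_perm_permutes perm_word_block_perm)
    show "P \<subseteq> F ` (P1 \<times> P2)"
    proof
      fix \<sigma> assume "\<sigma> \<in> P"
      then have perm: "\<sigma> permutes {..<?m + ?l}" and word: "perm_word \<sigma> (a @ b) = w1 @ w2"
        by (auto simp: P_def)
      have "\<sigma> i < ?m" if "i < ?m" for i
        using perm_word_append_stable[OF _ word len assms(2,3) that] perm by simp
      then obtain s t where st: "s permutes {..<?m}" "t permutes {..<?l}" "\<sigma> = block_perm ?m ?l s t"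
        using permutes_block_decomp[OF perm] by blast
      have "perm_word s a @ perm_word t b = w1 @ w2"
        using word by (simp add: st perm_word_block_perm)
      then have "perm_word s a = w1" "perm_word t b = w2"
        using len by simp_all
      then show "\<sigma> \<in> F ` (P1 \<times> P2)"
        using st by (auto simp: F_def P1_def P2_def)
    qed
  qed
  have "omega_coeff q a w1 * omega_coeff q b w2
      = (\<Sum>s\<in>P1. \<Sum>t\<in>P2. braid_coeff q s a * braid_coeff q t b)"
    unfolding omega_coeff_def P1_def P2_def by (rule sum_product)
  also have "\<dots> = (\<Sum>(s, t)\<in>P1 \<times> P2. braid_coeff q (F (s, t)) (a @ b))"
    unfolding sum.cartesian_product
    by (rule sum.cong) (auto simp: F_def P1_def P2_def braid_coeff_block_perm)
  also have "\<dots> = (\<Sum>\<sigma>\<in>P. braid_coeff q \<sigma> (a @ b))"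
    using sum.reindex_bij_betw[OF \<open>bij_betw F (P1 \<times> P2) P\<close>] by (simp add: case_prod_unfold)
  finally show ?thesis unfolding omega_coeff_def P_def by simp
qed

lemma tmult_fixed_length:
  assumes "\<And>a. u a \<noteq> 0 \<Longrightarrow> length a = m"
  shows "tmult u v w = (if m \<le> length w then u (take m w) * v (drop m w) else 0)"
proof -
  have "u (take k w) = 0" if "k \<le> length w" "k \<noteq> m" for k
  proof (rule ccontr)
    assume "u (take k w) \<noteq> 0"
    then have "length (take k w) = m" by (rule assms)
    then show False using that by simp
  qed
  then have "tmult u v w = (\<Sum>k\<le>length w. if k = m then u (take m w) * v (drop m w) else 0)"
    unfolding tmult_def by (intro sum.cong) auto
  then show ?thesis by simp
qed

lemma qsymm_tmult_append:
  assumes fin_u: "finite {a. u a \<noteq> 0}" and fin_v: "finite {b. v b \<noteq> 0}"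
    and u: "\<And>a. u a \<noteq> 0 \<Longrightarrow> length a = length w1 \<and> set a \<subseteq> S"
    and w2: "set w2 \<inter> S = {}"
  shows "qsymm q (tmult u v) (w1 @ w2) = qsymm q u w1 * qsymm q v w2"
proof -
  let ?U = "{a. u a \<noteq> 0}" and ?V = "{b. v b \<noteq> 0}" and ?app = "\<lambda>(a, b). a @ b"
  have tm: "tmult u v w
      = (if length w1 \<le> length w then u (take (length w1) w) * v (drop (length w1) w) else 0)"
    for w using u by (intro tmult_fixed_length) blast
  have inj: "inj_on ?app (?U \<times> ?V)"
  proof (rule inj_onI, clarsimp)
    fix a b a' b' assume "u a \<noteq> 0" "u a' \<noteq> 0" "a @ b = a' @ b'"
    then show "a = a' \<and> b = b'" using u[of a] u[of a'] by (simp add: append_eq_append_conv)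
  qed
  have supp: "{w. tmult u v w \<noteq> 0} \<subseteq> ?app ` (?U \<times> ?V)"
  proof
    fix w assume "w \<in> {w. tmult u v w \<noteq> 0}"
    then have "(take (length w1) w, drop (length w1) w) \<in> ?U \<times> ?V"
      by (simp add: tm split: if_splits)
    then show "w \<in> ?app ` (?U \<times> ?V)"
      by (intro image_eqI[where x = "(take (length w1) w, drop (length w1) w)"]) simp_all
  qed
  have "qsymm q u w1 * qsymm q v w2
      = (\<Sum>(a, b)\<in>?U \<times> ?V. (u a * omega_coeff q a w1) * (v b * omega_coeff q b w2))"
    unfolding qsymm_def sum_product sum.cartesian_product ..
  also have "\<dots> = (\<Sum>(a, b)\<in>?U \<times> ?V. tmult u v (a @ b) * omega_coeff q (a @ b) (w1 @ w2))"
  proof (rule sum.cong)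
    fix p assume "p \<in> ?U \<times> ?V"
    then obtain a b where p: "p = (a, b)" "u a \<noteq> 0" by auto
    have "omega_coeff q (a @ b) (w1 @ w2) = omega_coeff q a w1 * omega_coeff q b w2"
      using u[OF p(2)] w2 by (intro omega_coeff_append[where S = S]) auto
    moreover have "tmult u v (a @ b) = u a * v b"
      using u[OF p(2)] by (simp add: tm)
    ultimately show "(case p of (a, b) \<Rightarrow> u a * omega_coeff q a w1 * (v b * omega_coeff q b w2))
      = (case p of (a, b) \<Rightarrow> tmult u v (a @ b) * omega_coeff q (a @ b) (w1 @ w2))"
      by (simp add: p algebra_simps)
  qed simp
  also have "\<dots> = (\<Sum>w\<in>?app ` (?U \<times> ?V). tmult u v w * omega_coeff q w (w1 @ w2))"
    using sum.reindex[OF inj, of "\<lambda>w. tmult u v w * omega_coeff q w (w1 @ w2)"]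
    by (simp add: case_prod_unfold)
  also have "\<dots> = (\<Sum>w\<in>{w. tmult u v w \<noteq> 0}. tmult u v w * omega_coeff q w (w1 @ w2))"
    using fin_u fin_v supp by (intro sum.mono_neutral_right) auto
  finally show ?thesis unfolding qsymm_def by simp
qed

lemma qsymm_nonzero_imp_rearrangement:
  assumes "qsymm q u w \<noteq> 0"
  obtains a where "u a \<noteq> 0" "mset w = mset a"
proof -
  obtain a where a: "u a \<noteq> 0" "omega_coeff q a w \<noteq> 0"
    using assms unfolding qsymm_def by (auto elim: sum.not_neutral_contains_not_neutral)
  then obtain \<sigma> where "\<sigma> permutes {..<length a}" "perm_word \<sigma> a = w"
    unfolding omega_coeff_def by (auto elim: sum.not_neutral_contains_not_neutral)
  then show ?thesis using that a(1) mset_perm_word by blast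
qed

lemma homog_mset_eq: "homog u d \<Longrightarrow> u a \<noteq> 0 \<Longrightarrow> u b \<noteq> 0 \<Longrightarrow> mset a = mset b"
  by (simp add: homog_def multiset_eq_iff count_mset)

lemma homog_letters_in_mu:
  assumes "tvec n u" "homog u d" "u a \<noteq> 0"
  shows "set a \<subseteq> mu n d"
proof
  fix i assume i: "i \<in> set a"
  then have "0 < count_list a i" using count_list_0_iff[of a i] by simp
  moreover have "count_list a i = d i" using assms(2,3) by (simp add: homog_def)
  moreover have "i < n" using assms(1,3) i by (auto simp: tvec_def)
  ultimately show "i \<in> mu n d" by (simp add: mu_def)
qed

theorem lemma5p3:
  fixes n :: nat and q :: "nat \<Rightarrow> nat \<Rightarrow> 'k::field_char_0"
    and u v :: "nat list \<Rightarrow> 'k" and du dv :: "nat \<Rightarrow> nat"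
  assumes "alg_closed TYPE('k)"
    and "\<forall>i<n. \<forall>j<n. q i j \<noteq> 0"
    and "tvec n u" and "tvec n v"
    and "homog u du" and "homog v dv"
    and "mu n du \<inter> mu n dv = {}"
    and "nichols_zero q (tmult u v)"
  shows "nichols_zero q u \<or> nichols_zero q v"
proof (rule ccontr)
  assume "\<not> (nichols_zero q u \<or> nichols_zero q v)"
  then obtain w1 w2 where w: "qsymm q u w1 \<noteq> 0" "qsymm q v w2 \<noteq> 0"
    unfolding nichols_zero_def by blast
  obtain a0 where a0: "u a0 \<noteq> 0" "mset w1 = mset a0"
    using w(1) by (rule qsymm_nonzero_imp_rearrangement)
  obtain b0 where b0: "v b0 \<noteq> 0" "mset w2 = mset b0"
    using w(2) by (rule qsymm_nonzero_imp_rearrangement)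
  have "length a = length w1 \<and> set a \<subseteq> mu n du" if "u a \<noteq> 0" for a
  proof
    show "length a = length w1"
      using homog_mset_eq[OF assms(5) that a0(1)] a0(2) by (metis mset_eq_length)
    show "set a \<subseteq> mu n du"
      using assms(3,5) that by (rule homog_letters_in_mu)
  qed
  moreover have "set w2 \<inter> mu n du = {}"
  proof -
    have "set w2 = set b0"
      using b0(2) by (metis set_mset_mset)
    then show ?thesis
      using homog_letters_in_mu[OF assms(4,6) b0(1)] assms(7) by blast
  qed
  ultimately have "qsymm q (tmult u v) (w1 @ w2) = qsymm q u w1 * qsymm q v w2"
    using assms(3,4) unfolding tvec_def by (blast intro: qsymm_tmult_append)
  then show False using w assms(8) by (simp add: nichols_zero_def)
qed

end
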